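(* Let $V:\mathbb{R}\to\mathbb{R}$ be convex and $L$-Lipschitz with $m:=e^{-V}$ a probability density, and let $C_V>0$ be a constant such that for all $x\in\mathbb{R}$, $C_V^{-1}\le e^{-V(x)}\big/\min\big(\int_{-\infty}^x e^{-V},\int_x^\infty e^{-V}\big)\le C_V$. Let $0<c<C$ and $f\in\mathcal{P}_{c,C}$. Then the optimal transport map $T$ from $m$ to $f$ satisfies $$\frac{c}{C C_V^2}\le T'\le\frac{C C_V^2}{c}.$$
   Context: $\mathcal{P}_{c,C}:=\{g\in\mathcal{P}(\mathbb{R}):\ c\,m\le g\le C\,m\}$. The optimal transport map (for quadratic cost) from $m$ to $f$ on $\mathbb{R}$ is the monotone map $T=F_f^{-1}\circ F_m$, where $F_m,F_f$ are the cumulative distribution functions. *)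

theory Defs
  imports "HOL-Analysis.Analysis"
begin

definition cdf :: "(real \<Rightarrow> real) \<Rightarrow> real \<Rightarrow> real" where
  "cdf g x = (LBINT t:{..x}. g t)"

text \<open>Generalized inverse (quantile function) of a cdf F; for strictly increasing
  continuous F and u in (0,1) this is the usual inverse.\<close>
definition quantile :: "(real \<Rightarrow> real) \<Rightarrow> real \<Rightarrow> real" where
  "quantile F u = Inf {y. u \<le> F y}"

text \<open>Monotone optimal transport map from density m to density f on the real line.\<close>
definition ot_map :: "(real \<Rightarrow> real) \<Rightarrow> (real \<Rightarrow> real) \<Rightarrow> real \<Rightarrow> real" where
  "ot_map m f x = quantile (cdf f) (cdf m x)"

end

theory Submission
  imports Defs
begin

(*
  With F_m, F_f the distribution functions, T = F_f^-1 o F_m satisfies F_f (T x) = F_m x.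
  Because c m <= f <= C m, increments of F_f are comparable to those of F_m, so the difference
  quotient of T at x is, up to a factor in [1/C, 1/c], the ratio of the difference quotients of
  F_m at x and at T x, which tends to m x / m (T x).
  Since f is only bounded almost everywhere, T need not be differentiable everywhere: a Vitali
  covering argument shows that the lower and upper Dini derivates of a continuous increasing
  function cannot be separated by a gap p < q on a set of positive measure, and where there is no
  gap, difference quotients bounded away from 0 and infinity converge.
  Finally F_f (T x) = F_m x and the same identity for the tails compare min (F_m, 1 - F_m) at x and
  at T x up to the factors c, C; with the hypothesis on C_V at both points this confines
  m x / m (T x) to [c / C_V^2, C C_V^2].
*)

section \<open>Dini derivates of monotone functions\<close>

definition Dini_gap :: "(real \<Rightarrow> real) \<Rightarrow> real \<Rightarrow> real \<Rightarrow> real \<Rightarrow> bool" where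
  "Dini_gap g p q x \<longleftrightarrow>
     (\<exists>\<^sub>F y in at x. (g y - g x) / (y - x) < p) \<and> (\<exists>\<^sub>F y in at x. q < (g y - g x) / (y - x))"

lemma Dini_gap_mono:
  "Dini_gap g p q x \<Longrightarrow> p \<le> p' \<Longrightarrow> q' \<le> q \<Longrightarrow> Dini_gap g p' q' x"
  unfolding Dini_gap_def by (auto elim: frequently_elim1)

lemma Vitali_covering_cballs_open_remainder:
  fixes E :: "'a::euclidean_space set"
  assumes "\<And>x d. x \<in> E \<Longrightarrow> 0 < d \<Longrightarrow>
    \<exists>i. 0 < snd i \<and> snd i < d \<and> x \<in> cball (fst i) (snd i) \<and> P i"
  obtains C where "countable C" "\<And>i. i \<in> C \<Longrightarrow> 0 < snd i \<and> P i"
    "disjoint_family_on (\<lambda>i. cball (fst i) (snd i)) C"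
    "negligible (E - (\<Union>i\<in>C. ball (fst i) (snd i)))"
proof -
  obtain C where C: "countable C" "C \<subseteq> {i. 0 < snd i \<and> P i}"
    "pairwise (\<lambda>i j. disjnt (cball (fst i) (snd i)) (cball (fst j) (snd j))) C"
    "negligible (E - (\<Union>i\<in>C. cball (fst i) (snd i)))"
    by (rule Vitali_covering_theorem_cballs[of "{i. 0 < snd i \<and> P i}" snd E fst])
      (use assms in fastforce)+
  have "negligible (\<Union>i\<in>C. sphere (fst i) (snd i))"
    using C(1) by (intro negligible_countable_Union) (auto simp: negligible_sphere)
  with C(4) have "negligible ((E - (\<Union>i\<in>C. cball (fst i) (snd i))) \<union> (\<Union>i\<in>C. sphere (fst i) (snd i)))"
    by (rule negligible_Un)
  moreover have "E - (\<Union>i\<in>C. ball (fst i) (snd i))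
      \<subseteq> (E - (\<Union>i\<in>C. cball (fst i) (snd i))) \<union> (\<Union>i\<in>C. sphere (fst i) (snd i))"
    by (fastforce simp: dist_commute less_eq_real_def)
  ultimately have "negligible (E - (\<Union>i\<in>C. ball (fst i) (snd i)))"
    by (rule negligible_subset)
  moreover have "disjoint_family_on (\<lambda>i. cball (fst i) (snd i)) C"
    using C(3) unfolding disjoint_family_on_def pairwise_def disjnt_def by blast
  ultimately show thesis
    using that C(1,2) by blast
qed

lemma emeasure_interval_measure_UN_cballs:
  fixes g :: "real \<Rightarrow> real"
  assumes g: "mono g" "continuous_on UNIV g" and C: "countable C"
    and disj: "disjoint_family_on (\<lambda>i. cball (fst i) (snd i)) C"
    and r: "\<And>i. i \<in> C \<Longrightarrow> 0 \<le> snd i"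
  shows "emeasure (interval_measure g) (\<Union>i\<in>C. cball (fst i) (snd i))
    = (\<integral>\<^sup>+i. ennreal (g (fst i + snd i) - g (fst i - snd i)) \<partial>count_space C)"
proof -
  have "emeasure (interval_measure g) (\<Union>i\<in>C. cball (fst i) (snd i))
      = (\<integral>\<^sup>+i. emeasure (interval_measure g) (cball (fst i) (snd i)) \<partial>count_space C)"
    using C disj by (intro emeasure_UN_countable) auto
  also have "\<dots> = (\<integral>\<^sup>+i. ennreal (g (fst i + snd i) - g (fst i - snd i)) \<partial>count_space C)"
    using g r by (intro nn_integral_cong)
      (simp add: cball_eq_atLeastAtMost emeasure_interval_measure_Icc mono_def)
  finally show ?thesis .
qed

lemma frequently_quotient_imp_cball:
  fixes g :: "real \<Rightarrow> real"
  assumes "\<exists>\<^sub>F y in at x. P ((g y - g x) / (y - x))" "open U" "x \<in> U" "0 < d"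
  obtains c r where "0 < r" "r < d" "x \<in> cball c r" "cball c r \<subseteq> U"
    "P ((g (c + r) - g (c - r)) / (2 * r))"
proof -
  obtain e where e: "0 < e" "ball x e \<subseteq> U"
    using assms(2,3) open_contains_ball by blast
  obtain y where y: "y \<noteq> x" "dist y x < min d e" "P ((g y - g x) / (y - x))"
    using assms(1) \<open>0 < d\<close> e(1) unfolding frequently_at by (meson min_less_iff_conj)
  define c where "c = (x + y) / 2"
  define r where "r = \<bar>y - x\<bar> / 2"
  have "0 < r" "r < d" "x \<in> cball c r"
    using y by (auto simp: r_def c_def dist_real_def)
  moreover have "cball c r \<subseteq> ball x e"
    using y(2) unfolding subset_iff mem_cball mem_ball dist_real_def c_def r_def
    by (auto split: abs_split simp: field_simps)
  moreover have "(g (c + r) - g (c - r)) / (2 * r) = (g y - g x) / (y - x)"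
    using y(1) by (cases "x < y") (auto simp: c_def r_def field_simps)
  ultimately show thesis
    using that e(2) y(3) by auto
qed

lemma emeasure_UN_cballs_growth_le:
  fixes g :: "real \<Rightarrow> real" and C1 C2 :: "(real \<times> real) set"
  assumes g: "mono g" "continuous_on UNIV g"
    and C1: "countable C1" "disjoint_family_on (\<lambda>i. cball (fst i) (snd i)) C1"
      "\<And>i. i \<in> C1 \<Longrightarrow> 0 \<le> snd i \<and> g (fst i + snd i) - g (fst i - snd i) \<le> p * (2 * snd i)"
    and C2: "countable C2" "disjoint_family_on (\<lambda>i. cball (fst i) (snd i)) C2"
      "\<And>i. i \<in> C2 \<Longrightarrow> 0 \<le> snd i \<and> q * (2 * snd i) \<le> g (fst i + snd i) - g (fst i - snd i)"
    and sub: "(\<Union>i\<in>C2. cball (fst i) (snd i)) \<subseteq> (\<Union>i\<in>C1. cball (fst i) (snd i))"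
    and "0 \<le> p" "0 \<le> q"
  shows "ennreal q * emeasure lborel (\<Union>i\<in>C2. cball (fst i) (snd i))
    \<le> ennreal p * emeasure lborel (\<Union>i\<in>C1. cball (fst i) (snd i))"
proof -
  define incr where "incr i = g (fst i + snd i) - g (fst i - snd i)" for i :: "real \<times> real"
  have lborel_UN:
    "emeasure lborel (\<Union>i\<in>C. cball (fst i) (snd i)) = (\<integral>\<^sup>+i. ennreal (2 * snd i) \<partial>count_space C)"
    if "countable C" "disjoint_family_on (\<lambda>i. cball (fst i) (snd i)) C" "\<And>i. i \<in> C \<Longrightarrow> 0 \<le> snd i"
    for C :: "(real \<times> real) set"
    using emeasure_interval_measure_UN_cballs[of "\<lambda>x. x" C] that by (simp add: lborel_eq_real mono_def)
  have "ennreal q * emeasure lborel (\<Union>i\<in>C2. cball (fst i) (snd i))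
      = (\<integral>\<^sup>+i. ennreal (q * (2 * snd i)) \<partial>count_space C2)"
    using C2 \<open>0 \<le> q\<close> by (simp add: lborel_UN nn_integral_cmult[symmetric] ennreal_mult')
  also have "\<dots> \<le> (\<integral>\<^sup>+i. ennreal (incr i) \<partial>count_space C2)"
    using C2(3) by (intro nn_integral_mono ennreal_leI) (auto simp: incr_def)
  also have "\<dots> = emeasure (interval_measure g) (\<Union>i\<in>C2. cball (fst i) (snd i))"
    using emeasure_interval_measure_UN_cballs[OF g C2(1,2)] C2(3) by (simp add: incr_def)
  also have "\<dots> \<le> emeasure (interval_measure g) (\<Union>i\<in>C1. cball (fst i) (snd i))"
    using C1(1) sub by (intro emeasure_mono) (auto intro: sets.countable_UN'')
  also have "\<dots> = (\<integral>\<^sup>+i. ennreal (incr i) \<partial>count_space C1)"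
    using emeasure_interval_measure_UN_cballs[OF g C1(1,2)] C1(3) by (simp add: incr_def)
  also have "\<dots> \<le> (\<integral>\<^sup>+i. ennreal (p * (2 * snd i)) \<partial>count_space C1)"
    using C1(3) by (intro nn_integral_mono ennreal_leI) (auto simp: incr_def)
  also have "\<dots> = ennreal p * emeasure lborel (\<Union>i\<in>C1. cball (fst i) (snd i))"
    using C1 \<open>0 \<le> p\<close> by (simp add: lborel_UN nn_integral_cmult[symmetric] ennreal_mult')
  finally show ?thesis .
qed

lemma open_subset_lmeasurable:
  fixes W U :: "'a::euclidean_space set"
  shows "open W \<Longrightarrow> W \<subseteq> U \<Longrightarrow> U \<in> lmeasurable \<Longrightarrow> W \<in> lmeasurable"
  by (metis fmeasurableI2 borel_open sets_completionI_sets sets_lborel)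

lemma Dini_gap_shrink:
  fixes g :: "real \<Rightarrow> real"
  assumes g: "mono g" "continuous_on UNIV g" and pq: "0 < p" "p < q"
    and U: "open U" "U \<in> lmeasurable" and E: "\<And>x. x \<in> E \<Longrightarrow> x \<in> U \<and> Dini_gap g p q x"
  obtains W where "open W" "W \<subseteq> U" "negligible (E - W)"
    "measure lebesgue W \<le> p / q * measure lebesgue U"
proof -
  define balls where "balls C = (\<Union>i\<in>C. ball (fst i) (snd i))" for C :: "(real \<times> real) set"
  define cballs where "cballs C = (\<Union>i\<in>C. cball (fst i) (snd i))" for C :: "(real \<times> real) set"
  \<comment> \<open>Cover \<open>E\<close> by disjoint intervals on which \<open>g\<close> grows slower than \<open>p\<close>, then cover what lies
    inside them by disjoint intervals on which \<open>g\<close> grows faster than \<open>q\<close>; measuring both families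
    with the Stieltjes measure of \<open>g\<close> gives \<open>q |W| \<le> p |U|\<close>.\<close>
  obtain C1 where C1: "countable C1" "\<And>i. i \<in> C1 \<Longrightarrow> 0 < snd i \<and> cball (fst i) (snd i) \<subseteq> U
        \<and> g (fst i + snd i) - g (fst i - snd i) \<le> p * (2 * snd i)"
    "disjoint_family_on (\<lambda>i. cball (fst i) (snd i)) C1" "negligible (E - balls C1)"
  proof (rule Vitali_covering_cballs_open_remainder[of E])
    fix x d :: real assume x: "x \<in> E" and "0 < d"
    have slow: "\<exists>\<^sub>F y in at x. (g y - g x) / (y - x) < p" and "x \<in> U"
      using E[OF x] by (auto simp: Dini_gap_def)
    obtain c r where "0 < r" "r < d" "x \<in> cball c r" "cball c r \<subseteq> U"
        "(g (c + r) - g (c - r)) / (2 * r) < p"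
      by (rule frequently_quotient_imp_cball[OF slow U(1) \<open>x \<in> U\<close> \<open>0 < d\<close>])
    then show "\<exists>i. 0 < snd i \<and> snd i < d \<and> x \<in> cball (fst i) (snd i)
        \<and> cball (fst i) (snd i) \<subseteq> U
        \<and> g (fst i + snd i) - g (fst i - snd i) \<le> p * (2 * snd i)"
      by (intro exI[of _ "(c, r)"]) (simp add: field_simps)
  qed (auto simp: balls_def)
  have "open (balls C1)"
    by (simp add: balls_def open_UN)
  obtain C2 where C2: "countable C2" "\<And>i. i \<in> C2 \<Longrightarrow> 0 < snd i \<and> cball (fst i) (snd i) \<subseteq> balls C1
        \<and> q * (2 * snd i) \<le> g (fst i + snd i) - g (fst i - snd i)"
    "disjoint_family_on (\<lambda>i. cball (fst i) (snd i)) C2" "negligible (E \<inter> balls C1 - balls C2)"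
  proof (rule Vitali_covering_cballs_open_remainder[of "E \<inter> balls C1"])
    fix x d :: real assume x: "x \<in> E \<inter> balls C1" and "0 < d"
    have fast: "\<exists>\<^sub>F y in at x. q < (g y - g x) / (y - x)"
      using E x by (auto simp: Dini_gap_def)
    obtain c r where "0 < r" "r < d" "x \<in> cball c r" "cball c r \<subseteq> balls C1"
        "q < (g (c + r) - g (c - r)) / (2 * r)"
      using frequently_quotient_imp_cball[OF fast \<open>open (balls C1)\<close> _ \<open>0 < d\<close>] x by blast
    then show "\<exists>i. 0 < snd i \<and> snd i < d \<and> x \<in> cball (fst i) (snd i)
        \<and> cball (fst i) (snd i) \<subseteq> balls C1
        \<and> q * (2 * snd i) \<le> g (fst i + snd i) - g (fst i - snd i)"
      by (intro exI[of _ "(c, r)"]) (simp add: field_simps)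
  qed (auto simp: balls_def)
  define W where "W = balls C2"
  have "open W"
    by (simp add: W_def balls_def open_UN)
  have "W \<subseteq> cballs C2" "balls C1 \<subseteq> cballs C1"
    unfolding W_def balls_def cballs_def by (intro UN_mono; auto)+
  moreover have "cballs C2 \<subseteq> balls C1" "cballs C1 \<subseteq> U"
    unfolding cballs_def using C1(2) C2(2) by (intro UN_least; blast)+
  ultimately have C2_C1: "cballs C2 \<subseteq> cballs C1" and "W \<subseteq> U"
    by blast+
  have "E - W \<subseteq> (E - balls C1) \<union> (E \<inter> balls C1 - balls C2)"
    by (auto simp: W_def)
  then have "negligible (E - W)"
    using C1(4) C2(4) negligible_Un negligible_subset by blast
  have "ennreal q * emeasure lborel W \<le> ennreal q * emeasure lborel (cballs C2)"
    using \<open>W \<subseteq> cballs C2\<close> C2(1) unfolding cballs_def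
    by (intro mult_left_mono emeasure_mono) (auto intro: sets.countable_UN'')
  also have "\<dots> \<le> ennreal p * emeasure lborel (cballs C1)"
    unfolding cballs_def using C1 C2 C2_C1 pq
    by (intro emeasure_UN_cballs_growth_le[OF g]) (auto simp: cballs_def less_imp_le)
  also have "\<dots> \<le> ennreal p * emeasure lborel U"
    using \<open>cballs C1 \<subseteq> U\<close> by (intro mult_left_mono emeasure_mono) (auto simp: U)
  finally have "ennreal q * emeasure lborel W \<le> ennreal p * emeasure lborel U" .
  moreover have lborel_lebesgue: "emeasure lborel S = ennreal (measure lebesgue S)"
    if "open S" "S \<in> lmeasurable" for S
    using that by (simp add: fmeasurable_def emeasure_eq_ennreal_measure)
  moreover have "W \<in> lmeasurable"
    using \<open>open W\<close> \<open>W \<subseteq> U\<close> U(2) by (rule open_subset_lmeasurable)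
  ultimately have "ennreal (q * measure lebesgue W) \<le> ennreal (p * measure lebesgue U)"
    using pq by (simp only: lborel_lebesgue U \<open>open W\<close> ennreal_mult' less_imp_le)
  then have "measure lebesgue W \<le> p / q * measure lebesgue U"
    using pq by (simp add: ennreal_le_iff field_simps)
  with \<open>open W\<close> \<open>W \<subseteq> U\<close> \<open>negligible (E - W)\<close> show thesis
    by (rule that)
qed

lemma Dini_gap_shrink_power:
  fixes g :: "real \<Rightarrow> real"
  assumes g: "mono g" "continuous_on UNIV g" and pq: "0 < p" "p < q"
    and U: "open U" "U \<in> lmeasurable" and E: "\<And>x. x \<in> E \<Longrightarrow> x \<in> U \<and> Dini_gap g p q x"
  shows "\<exists>W. open W \<and> W \<subseteq> U \<and> negligible (E - W)
    \<and> measure lebesgue W \<le> (p / q) ^ n * measure lebesgue U"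
proof (induction n)
  case 0
  have "E - U = {}"
    using E by blast
  then show ?case
    using U by (intro exI[of _ U]) auto
next
  case (Suc n)
  then obtain W where W: "open W" "W \<subseteq> U" "negligible (E - W)"
    "measure lebesgue W \<le> (p / q) ^ n * measure lebesgue U"
    by blast
  obtain W' where W': "open W'" "W' \<subseteq> W" "negligible (E \<inter> W - W')"
    "measure lebesgue W' \<le> p / q * measure lebesgue W"
    by (rule Dini_gap_shrink[OF g pq W(1) open_subset_lmeasurable[OF W(1,2) U(2)], of "E \<inter> W"])
      (use E in auto)
  have "negligible (E - W')"
    using negligible_Un[OF W(3) W'(3)] by (rule negligible_subset) auto
  moreover have "measure lebesgue W' \<le> (p / q) ^ Suc n * measure lebesgue U"
    using W'(4) mult_left_mono[OF W(4), of "p / q"] pq by (simp add: mult.assoc)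
  ultimately show ?case
    using W'(1,2) W(2) by (intro exI[of _ W']) auto
qed

lemma negligible_Dini_gap:
  fixes g :: "real \<Rightarrow> real"
  assumes g: "mono g" "continuous_on UNIV g" and pq: "0 < p" "p < q"
  shows "negligible {x. Dini_gap g p q x}"
proof (rule negligible_on_intervals[THEN iffD2], intro allI)
  fix a b :: real
  define U where "U = ball (0::real) (\<bar>a\<bar> + \<bar>b\<bar> + 1)"
  define E where "E = {x. Dini_gap g p q x} \<inter> cbox a b"
  have U: "open U" "U \<in> lmeasurable"
    by (simp_all add: U_def)
  have E: "x \<in> U \<and> Dini_gap g p q x" if "x \<in> E" for x
    using that by (auto simp: E_def U_def dist_real_def)
  show "negligible E"
    unfolding negligible_outer_le
  proof (intro allI impI)
    fix e :: real assume "0 < e"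
    then have "0 < e / (measure lebesgue U + 1)"
      by (simp add: add_nonneg_pos)
    then obtain n where n: "(p / q) ^ n < e / (measure lebesgue U + 1)"
      using real_arch_pow_inv[of _ "p / q"] pq by auto
    obtain W where W: "open W" "W \<subseteq> U" "negligible (E - W)"
      "measure lebesgue W \<le> (p / q) ^ n * measure lebesgue U"
      using Dini_gap_shrink_power[OF g pq U E] by blast
    have "(p / q) ^ n * measure lebesgue U \<le> (p / q) ^ n * (measure lebesgue U + 1)"
      using pq by simp
    also have "\<dots> \<le> e"
      using n by (simp add: pos_less_divide_eq add_nonneg_pos less_imp_le)
    finally have "measure lebesgue W \<le> e"
      using W(4) by linarith
    moreover have "W \<in> lmeasurable"
      using W(1,2) U(2) by (rule open_subset_lmeasurable)
    moreover have "measure lebesgue (W \<union> (E - W)) = measure lebesgue W"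
      using \<open>W \<in> lmeasurable\<close> W(3) by (intro measure_Un_null_set) (auto simp: negligible_iff_null_sets)
    ultimately show "\<exists>T. E \<subseteq> T \<and> T \<in> lmeasurable \<and> measure lebesgue T \<le> e"
      using fmeasurable.Un[OF \<open>W \<in> lmeasurable\<close> negligible_imp_measurable[OF W(3)]]
      by (intro exI[of _ "W \<union> (E - W)"]) auto
  qed
qed

lemma AE_no_Dini_gap:
  fixes g :: "real \<Rightarrow> real"
  assumes "mono g" "continuous_on UNIV g"
  shows "AE x in lborel. \<forall>p q. 0 < p \<longrightarrow> p < q \<longrightarrow> \<not> Dini_gap g p q x"
proof -
  have "{x. \<exists>p q. 0 < p \<and> p < q \<and> Dini_gap g p q x}
      = (\<Union>(p, q)\<in>(\<rat> \<inter> {0<..}) \<times> \<rat>. {x. p < q \<and> Dini_gap g p q x})"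
  proof (intro equalityI subsetI)
    fix x assume "x \<in> {x. \<exists>p q. 0 < p \<and> p < q \<and> Dini_gap g p q x}"
    then obtain p q where "0 < p" "p < q" "Dini_gap g p q x"
      by blast
    moreover obtain p' where "p' \<in> \<rat>" "p < p'" "p' < q"
      using Rats_dense_in_real[OF \<open>p < q\<close>] by blast
    moreover obtain q' where "q' \<in> \<rat>" "p' < q'" "q' < q"
      using Rats_dense_in_real[OF \<open>p' < q\<close>] by blast
    ultimately have "(p', q') \<in> (\<rat> \<inter> {0<..}) \<times> \<rat>" "p' < q'" "Dini_gap g p' q' x"
      using Dini_gap_mono[of g p q x p' q'] by auto
    then show "x \<in> (\<Union>(p, q)\<in>(\<rat> \<inter> {0<..}) \<times> \<rat>. {x. p < q \<and> Dini_gap g p q x})"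
      by force
  qed auto
  also have "negligible \<dots>"
  proof (intro negligible_countable_Union countable_image countable_SIGMA countable_rat)
    show "countable (\<rat> \<inter> {0<..} :: real set)"
      by (rule countable_subset[OF _ countable_rat]) auto
  next
    fix S assume "S \<in> (\<lambda>(p, q). {x. p < q \<and> Dini_gap g p q x}) ` ((\<rat> \<inter> {0<..}) \<times> \<rat>)"
    then obtain p q where "0 < p" "S = {x. p < q \<and> Dini_gap g p q x}"
      by auto
    then show "negligible S"
      using negligible_Dini_gap[OF assms \<open>0 < p\<close>, of q] by (cases "p < q") auto
  qed
  finally have "AE x in lebesgue. x \<notin> {x. \<exists>p q. 0 < p \<and> p < q \<and> Dini_gap g p q x}"
    by (intro AE_not_in) (simp add: negligible_iff_null_sets)
  then show ?thesis
    by (simp add: AE_completion_iff)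
qed

lemma has_real_derivative_if_no_Dini_gap:
  fixes g :: "real \<Rightarrow> real"
  assumes bounds: "\<forall>\<^sub>F y in at x. a \<le> (g y - g x) / (y - x) \<and> (g y - g x) / (y - x) \<le> b"
    and "0 < a" and no_gap: "\<And>p q. 0 < p \<Longrightarrow> p < q \<Longrightarrow> \<not> Dini_gap g p q x"
  shows "\<exists>D. (g has_real_derivative D) (at x)"
proof -
  define Q where "Q y = (g y - g x) / (y - x)" for y
  define l where "l = Liminf (at x) (\<lambda>y. ereal (Q y))"
  define u where "u = Limsup (at x) (\<lambda>y. ereal (Q y))"
  have "ereal a \<le> l" "u \<le> ereal b"
    unfolding l_def u_def using bounds
    by (auto intro!: Liminf_bounded Limsup_bounded elim: eventually_mono simp: Q_def)
  moreover have "l \<le> u"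
    unfolding l_def u_def by (rule Liminf_le_Limsup) simp
  ultimately obtain l' u' where l': "l = ereal l'" and u': "u = ereal u'" and "a \<le> l'"
    by (cases l; cases u) auto
  have "\<not> l' < u'"
  proof
    assume "l' < u'"
    then obtain p where "l' < p" "p < u'"
      using dense by blast
    then obtain q where "p < q" "q < u'"
      using dense by blast
    have "\<exists>\<^sub>F y in at x. Q y < p"
    proof (rule ccontr)
      assume "\<not> (\<exists>\<^sub>F y in at x. Q y < p)"
      then have "\<forall>\<^sub>F y in at x. ereal p \<le> ereal (Q y)"
        by (simp add: not_frequently not_less)
      then have "ereal p \<le> l"
        unfolding l_def by (rule Liminf_bounded)
      with l' \<open>l' < p\<close> show False
        by simp
    qed
    moreover have "\<exists>\<^sub>F y in at x. q < Q y"
    proof (rule ccontr)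
      assume "\<not> (\<exists>\<^sub>F y in at x. q < Q y)"
      then have "\<forall>\<^sub>F y in at x. ereal (Q y) \<le> ereal q"
        by (simp add: not_frequently not_less)
      then have "u \<le> ereal q"
        unfolding u_def by (rule Limsup_bounded)
      with u' \<open>q < u'\<close> show False
        by simp
    qed
    moreover have "0 < p"
      using \<open>0 < a\<close> \<open>a \<le> l'\<close> \<open>l' < p\<close> by linarith
    ultimately show False
      using no_gap[OF _ \<open>p < q\<close>] by (simp add: Dini_gap_def Q_def)
  qed
  then have "((\<lambda>y. ereal (Q y)) \<longlongrightarrow> ereal l') (at x)"
    using \<open>l \<le> u\<close> l' u' by (intro Liminf_eq_Limsup) (auto simp: l_def u_def)
  then have "(Q \<longlongrightarrow> l') (at x)"
    by (simp add: lim_ereal)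
  then have "(g has_real_derivative l') (at x)"
    by (simp add: has_field_derivative_iff Q_def[abs_def])
  then show ?thesis ..
qed

lemma tendsto_difference_quotient_ratio:
  fixes F g :: "real \<Rightarrow> real"
  assumes F: "(F has_real_derivative d) (at x)" "(F has_real_derivative d') (at (g x))" "d' \<noteq> 0"
    and g: "isCont g x" "\<And>y. y \<noteq> x \<Longrightarrow> g y \<noteq> g x"
  shows "((\<lambda>y. (F y - F x) / (y - x) / ((F (g y) - F (g x)) / (g y - g x))) \<longlongrightarrow> d / d') (at x)"
proof -
  have "\<forall>\<^sub>F y in at x. g y \<noteq> g x"
    using g(2) by (auto simp: eventually_at_filter)
  then have "filterlim g (at (g x)) (at x)"
    unfolding filterlim_at using g(1) by (auto simp: isCont_def)
  from filterlim_compose[OF F(2)[unfolded has_field_derivative_iff] this]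
  have "((\<lambda>y. (F (g y) - F (g x)) / (g y - g x)) \<longlongrightarrow> d') (at x)" .
  with F(1,3) show ?thesis
    by (intro tendsto_divide) (auto simp: has_field_derivative_iff)
qed

lemma has_real_derivative_of_comparable_increments:
  fixes F g :: "real \<Rightarrow> real"
  assumes F: "strict_mono F" "(F has_real_derivative d) (at x)" "(F has_real_derivative d') (at (g x))"
      "0 < d" "0 < d'"
    and g: "strict_mono g" "isCont g x"
    and bounds: "\<And>y. y \<noteq> x \<Longrightarrow>
      a \<le> (F (g y) - F (g x)) / (F y - F x) \<and> (F (g y) - F (g x)) / (F y - F x) \<le> b"
    and "0 < a" and no_gap: "\<And>p q. 0 < p \<Longrightarrow> p < q \<Longrightarrow> \<not> Dini_gap g p q x"
  shows "\<exists>D. (g has_real_derivative D) (at x) \<and> a * d / d' \<le> D \<and> D \<le> b * d / d'"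
proof -
  \<comment> \<open>The difference quotient \<open>Q\<close> of \<open>g\<close> factors as \<open>R * S\<close> with \<open>R\<close> trapped in \<open>[a, b]\<close>
    and \<open>S \<longrightarrow> d / d'\<close>: so \<open>Q\<close> stays away from \<open>0\<close> and \<open>\<infinity>\<close>, and \<open>R = Q / S\<close> passes the
    bounds to the limit.\<close>
  define rho where "rho = d / d'"
  define Q where "Q y = (g y - g x) / (y - x)" for y
  define R where "R y = (F (g y) - F (g x)) / (F y - F x)" for y
  define S where "S y = (F y - F x) / (y - x) / ((F (g y) - F (g x)) / (g y - g x))" for y
  have ne: "g y - g x \<noteq> 0" "F y - F x \<noteq> 0" "F (g y) - F (g x) \<noteq> 0" if "y \<noteq> x" for y
    using that F(1) g(1) by (auto simp: strict_mono_eq)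
  have Q_eq: "Q y = R y * S y" and S_ne: "S y \<noteq> 0" if "y \<noteq> x" for y
    using ne[OF that] that by (simp_all add: Q_def R_def S_def)
  have ev_ne: "\<forall>\<^sub>F y in at x. y \<noteq> x"
    by (simp add: eventually_at_filter)
  have S_lim: "(S \<longlongrightarrow> rho) (at x)"
    unfolding S_def[abs_def] rho_def using F(2,3,5) g(2) ne(1)
    by (intro tendsto_difference_quotient_ratio) auto
  have "0 < rho"
    using F(4,5) by (simp add: rho_def)
  then have "\<forall>\<^sub>F y in at x. rho / 2 < S y \<and> S y < 2 * rho"
    by (intro eventually_conj order_tendstoD[OF S_lim]) auto
  then have "\<forall>\<^sub>F y in at x. a * (rho / 2) \<le> Q y \<and> Q y \<le> b * (2 * rho)"
    using ev_ne
  proof eventually_elim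
    case (elim y)
    then have "a \<le> R y" "R y \<le> b"
      using bounds[of y] by (auto simp: R_def)
    with elim \<open>0 < a\<close> \<open>0 < rho\<close> have "a * (rho / 2) \<le> R y * S y" "R y * S y \<le> b * (2 * rho)"
      by (intro mult_mono; simp)+
    then show ?case
      by (simp add: Q_eq[OF elim(2)])
  qed
  moreover have "0 < a * (rho / 2)"
    using \<open>0 < a\<close> \<open>0 < rho\<close> by simp
  ultimately have "\<exists>D. (g has_real_derivative D) (at x)"
    unfolding Q_def by (rule has_real_derivative_if_no_Dini_gap[OF _ _ no_gap])
  then obtain D where D: "(g has_real_derivative D) (at x)" ..
  have "(R \<longlongrightarrow> D / rho) (at x)"
  proof (rule Lim_transform_eventually)
    show "((\<lambda>y. Q y / S y) \<longlongrightarrow> D / rho) (at x)"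
      using D S_lim \<open>0 < rho\<close>
      by (intro tendsto_divide) (auto simp: has_field_derivative_iff Q_def[abs_def])
    show "\<forall>\<^sub>F y in at x. Q y / S y = R y"
      using ev_ne by eventually_elim (simp add: Q_eq S_ne)
  qed
  moreover have "\<forall>\<^sub>F y in at x. a \<le> R y \<and> R y \<le> b"
    using ev_ne by eventually_elim (use bounds R_def in auto)
  ultimately have "a \<le> D / rho" "D / rho \<le> b"
    by (auto intro: tendsto_lowerbound tendsto_upperbound elim: eventually_mono)
  then have "a * d / d' \<le> D" "D \<le> b * d / d'"
    using F(4,5) by (simp_all add: rho_def field_simps)
  with D show ?thesis
    by blast
qed

section \<open>Distribution functions\<close>

definition ccdf :: "(real \<Rightarrow> real) \<Rightarrow> real \<Rightarrow> real" where
  "ccdf g x = (LBINT t:{x..}. g t)"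

lemma integrable_imp_set_integrable:
  fixes h :: "real \<Rightarrow> real"
  shows "integrable lborel h \<Longrightarrow> A \<in> sets borel \<Longrightarrow> set_integrable lborel A h"
  unfolding set_integrable_def by (rule integrable_mult_indicator) auto

lemma set_lborel_integral_nonneg:
  fixes h :: "real \<Rightarrow> real"
  shows "(\<And>t. 0 \<le> h t) \<Longrightarrow> 0 \<le> (LBINT t:A. h t)"
  unfolding set_lebesgue_integral_def by (intro integral_nonneg_AE AE_I2) (simp add: indicator_def)

lemma cdf_add_ccdf:
  fixes h :: "real \<Rightarrow> real"
  assumes "integrable lborel h"
  shows "cdf h x + ccdf h x = (LBINT t. h t)"
proof -
  have "AE t in lborel. \<not> (t \<in> {..x} \<and> t \<in> {x..})"
    using AE_lborel_singleton[of x] by eventually_elim auto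
  then have "(LBINT t:{..x} \<union> {x..}. h t) = cdf h x + ccdf h x"
    unfolding cdf_def ccdf_def
    by (intro set_integral_Un_AE integrable_imp_set_integrable assms) auto
  moreover have "{..x} \<union> {x..} = UNIV"
    by auto
  ultimately show ?thesis
    by (simp add: set_lebesgue_integral_def)
qed

lemma cdf_diff:
  fixes h :: "real \<Rightarrow> real"
  assumes "integrable lborel h" "x \<le> y"
  shows "cdf h y - cdf h x = (LBINT t:{x<..y}. h t)"
proof -
  have "{..y} = {..x} \<union> {x<..y}"
    using assms(2) by auto
  then have "cdf h y = cdf h x + (LBINT t:{x<..y}. h t)"
    unfolding cdf_def by (simp, intro set_integral_Un integrable_imp_set_integrable assms(1)) auto
  then show ?thesis
    by simp
qed

lemma set_integral_tendsto_zero_at_top: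
  fixes h :: "real \<Rightarrow> real" and A :: "real \<Rightarrow> real set"
  assumes h: "integrable lborel h" and A: "\<And>y. A y \<in> sets borel"
    and out: "\<And>t. \<forall>\<^sub>F y in at_top. t \<notin> A y"
  shows "((\<lambda>y. LBINT t:A y. h t) \<longlongrightarrow> 0) at_top"
proof -
  have "((\<lambda>y. LBINT t:A y. h t) \<longlongrightarrow> (LINT (t::real)|lborel. (0::real))) at_top"
    unfolding set_lebesgue_integral_def
  proof (rule integral_dominated_convergence_at_top[where w="\<lambda>t. \<bar>h t\<bar>"
        and s="\<lambda>y t. indicator (A y) t *\<^sub>R h t" and f="\<lambda>t. 0"])
    show "integrable lborel (\<lambda>t. \<bar>h t\<bar>)"
      using h by simp
    show "(\<lambda>t. indicator (A y) t *\<^sub>R h t) \<in> borel_measurable lborel" for y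
      using h A by (intro borel_measurable_integrable integrable_mult_indicator) auto
    show "AE t in lborel. ((\<lambda>y. indicator (A y) t *\<^sub>R h t) \<longlongrightarrow> 0) at_top"
    proof (intro AE_I2 tendsto_eventually)
      show "\<forall>\<^sub>F y in at_top. indicator (A y) t *\<^sub>R h t = 0" for t
        using out[of t] by eventually_elim simp
    qed
    show "\<forall>\<^sub>F y in at_top. AE t in lborel. norm (indicator (A y) t *\<^sub>R h t) \<le> \<bar>h t\<bar>"
      by (intro always_eventually allI AE_I2) (auto simp: indicator_def)
  qed simp
  then show ?thesis
    by simp
qed

lemma cdf_tendsto_at_bot:
  fixes h :: "real \<Rightarrow> real"
  assumes "integrable lborel h"
  shows "(cdf h \<longlongrightarrow> 0) at_bot"
proof -
  have "\<forall>\<^sub>F y in at_top. t \<notin> {..- y}" for t :: real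
    using eventually_gt_at_top[of "- t"] by eventually_elim auto
  then have "((\<lambda>y. cdf h (- y)) \<longlongrightarrow> 0) at_top"
    unfolding cdf_def using assms by (intro set_integral_tendsto_zero_at_top) auto
  then show ?thesis
    by (simp add: filterlim_at_bot_mirror)
qed

lemma ccdf_tendsto_at_top:
  fixes h :: "real \<Rightarrow> real"
  assumes "integrable lborel h"
  shows "(ccdf h \<longlongrightarrow> 0) at_top"
proof -
  have "\<forall>\<^sub>F y in at_top. t \<notin> {y..}" for t :: real
    using eventually_gt_at_top[of t] by eventually_elim auto
  then show ?thesis
    unfolding ccdf_def[abs_def] using assms by (intro set_integral_tendsto_zero_at_top) auto
qed

lemma cdf_has_real_derivative:
  fixes h :: "real \<Rightarrow> real"
  assumes h: "integrable lborel h" "continuous_on UNIV h"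
  shows "(cdf h has_real_derivative h x) (at x)"
proof -
  define a where "a = x - 1"
  have cdf_eq: "cdf h a + integral {a..y} h = cdf h y" if "a \<le> y" for y
  proof -
    have "cdf h y - cdf h a = (LBINT t:{a<..y}. h t)"
      using h(1) that by (rule cdf_diff)
    also have "\<dots> = (LBINT t:{a..y}. h t)"
    proof (rule set_integral_cong_set)
      show "set_borel_measurable lborel {a<..y} h" "set_borel_measurable lborel {a..y} h"
        unfolding set_borel_measurable_def
        by (intro borel_measurable_integrable integrable_imp_set_integrable[OF h(1), unfolded set_integrable_def],
            simp)+
      show "AE t in lborel. t \<in> {a..y} \<longleftrightarrow> t \<in> {a<..y}"
        using AE_lborel_singleton[of a] by eventually_elim auto
    qed
    also have "\<dots> = integral {a..y} h"
      using h by (intro set_borel_integral_eq_integral integrable_imp_set_integrable) auto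
    finally show ?thesis
      by simp
  qed
  have "((\<lambda>y. integral {a..y} h) has_real_derivative h x) (at x within {a..x + 1})"
    using continuous_on_subset[OF h(2)] by (intro integral_has_real_derivative) (auto simp: a_def)
  then have "((\<lambda>y. integral {a..y} h) has_real_derivative h x) (at x within {a<..<x + 1})"
    by (rule DERIV_subset) auto
  then have "((\<lambda>y. integral {a..y} h) has_real_derivative h x) (at x)"
    by (subst (asm) at_within_open) (auto simp: a_def)
  then have "((\<lambda>y. cdf h a + integral {a..y} h) has_real_derivative h x) (at x)"
    by (rule DERIV_add[OF DERIV_const, of _ _ _ _ "cdf h a", simplified])
  then show ?thesis
    by (rule has_field_derivative_transform_within_open[of _ _ _ "{a<..}"])
      (use cdf_eq in \<open>auto simp: a_def\<close>)
qed

lemma quantile_strict_mono: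
  assumes "strict_mono F"
  shows "quantile F (F z) = z"
proof -
  have "{y. F z \<le> F y} = {z..}"
    using strict_mono_less_eq[OF assms] by auto
  then show ?thesis
    by (simp add: quantile_def)
qed

section \<open>The monotone transport map between comparable densities\<close>

locale comparable_densities =
  fixes m f :: "real \<Rightarrow> real" and c C :: real
  assumes m_pos: "\<And>x. 0 < m x" and m_cont: "continuous_on UNIV m"
    and m_int: "integrable lborel m" and m_prob: "(LBINT x. m x) = 1"
    and f_int: "integrable lborel f" and f_prob: "(LBINT x. f x) = 1"
    and c_pos: "0 < c" and f_bounds: "AE x in lborel. c * m x \<le> f x \<and> f x \<le> C * m x"
begin

lemma set_integral_bounds:
  assumes "A \<in> sets borel"
  shows "c * (LBINT t:A. m t) \<le> (LBINT t:A. f t) \<and> (LBINT t:A. f t) \<le> C * (LBINT t:A. m t)"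
proof
  have lower: "AE t\<in>A in lborel. c * m t \<le> f t" and upper: "AE t\<in>A in lborel. f t \<le> C * m t"
    using f_bounds by (eventually_elim, simp)+
  have "(LBINT t:A. c * m t) \<le> (LBINT t:A. f t)"
    using assms lower
    by (intro set_integral_mono_AE integrable_imp_set_integrable m_int f_int integrable_mult_right)
  then show "c * (LBINT t:A. m t) \<le> (LBINT t:A. f t)"
    by simp
  have "(LBINT t:A. f t) \<le> (LBINT t:A. C * m t)"
    using assms upper
    by (intro set_integral_mono_AE integrable_imp_set_integrable m_int f_int integrable_mult_right)
  then show "(LBINT t:A. f t) \<le> C * (LBINT t:A. m t)"
    by simp
qed

lemma cdf_m_has_real_derivative: "(cdf m has_real_derivative m x) (at x)"
  using m_int m_cont by (rule cdf_has_real_derivative)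

lemma strict_mono_cdf_m: "strict_mono (cdf m)"
proof (rule strict_monoI)
  fix x y :: real
  assume "x < y"
  then show "cdf m x < cdf m y"
    by (rule DERIV_pos_imp_increasing) (use cdf_m_has_real_derivative m_pos in blast)
qed

lemma cdf_m_bounds: "0 < cdf m x \<and> cdf m x < 1"
proof
  have "0 \<le> cdf m (x - 1)"
    unfolding cdf_def by (rule set_lborel_integral_nonneg) (simp add: m_pos less_imp_le)
  also have "\<dots> < cdf m x"
    using strict_mono_cdf_m by (simp add: strict_mono_less)
  finally show "0 < cdf m x" .
  have "cdf m x < cdf m (x + 1)"
    using strict_mono_cdf_m by (simp add: strict_mono_less)
  also have "\<dots> \<le> 1"
    using cdf_add_ccdf[OF m_int, of "x + 1"] set_lborel_integral_nonneg[of m "{x + 1..}"] m_pos m_prob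
    by (simp add: ccdf_def less_imp_le)
  finally show "cdf m x < 1" .
qed

lemma cdf_quotient_bounds:
  assumes "x \<noteq> y"
  shows "c \<le> (cdf f y - cdf f x) / (cdf m y - cdf m x) \<and> (cdf f y - cdf f x) / (cdf m y - cdf m x) \<le> C"
proof -
  have *: "c \<le> (cdf f y - cdf f x) / (cdf m y - cdf m x) \<and> (cdf f y - cdf f x) / (cdf m y - cdf m x) \<le> C"
    if "x < y" for x y
  proof -
    have "0 < cdf m y - cdf m x"
      using strict_mono_cdf_m that by (simp add: strict_mono_less)
    moreover have "c * (cdf m y - cdf m x) \<le> cdf f y - cdf f x \<and> cdf f y - cdf f x \<le> C * (cdf m y - cdf m x)"
      using set_integral_bounds[of "{x<..y}"] that
      by (simp add: cdf_diff[OF m_int] cdf_diff[OF f_int])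
    ultimately show ?thesis
      by (simp add: field_simps)
  qed
  show ?thesis
  proof (cases "x < y")
    case False
    with assms have "y < x"
      by simp
    moreover have "(cdf f y - cdf f x) / (cdf m y - cdf m x) = (cdf f x - cdf f y) / (cdf m x - cdf m y)"
      by (metis minus_diff_eq minus_divide_divide)
    ultimately show ?thesis
      using *[of y x] by simp
  qed (rule *)
qed

lemma min_cdf_ccdf_m_pos: "0 < min (cdf m x) (ccdf m x)"
  using cdf_m_bounds[of x] cdf_add_ccdf[OF m_int, of x] m_prob by simp

lemma c_le_C: "c \<le> C"
  using cdf_quotient_bounds[of 0 1] by simp

lemma strict_mono_cdf_f: "strict_mono (cdf f)"
proof (rule strict_monoI)
  fix x y :: real
  assume "x < y"
  then have "0 < cdf m y - cdf m x"
    using strict_mono_cdf_m by (simp add: strict_mono_less)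
  moreover have "c \<le> (cdf f y - cdf f x) / (cdf m y - cdf m x)"
    using cdf_quotient_bounds[of x y] \<open>x < y\<close> by simp
  ultimately have "c * (cdf m y - cdf m x) \<le> cdf f y - cdf f x"
    by (simp add: le_divide_eq)
  moreover have "0 < c * (cdf m y - cdf m x)"
    using c_pos \<open>0 < cdf m y - cdf m x\<close> by simp
  ultimately show "cdf f x < cdf f y"
    by simp
qed

lemma isCont_cdf_f: "isCont (cdf f) x"
proof -
  have bound: "norm (cdf f y - cdf f x) \<le> C * \<bar>cdf m y - cdf m x\<bar>" for y
  proof (cases "y = x")
    case False
    define q where "q = (cdf f y - cdf f x) / (cdf m y - cdf m x)"
    have "cdf m y - cdf m x \<noteq> 0"
      using strict_mono_cdf_m False by (auto simp: strict_mono_eq)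
    then have "cdf f y - cdf f x = q * (cdf m y - cdf m x)"
      by (simp add: q_def)
    moreover have "\<bar>q\<bar> \<le> C"
      using cdf_quotient_bounds[OF False[symmetric]] c_pos unfolding q_def[symmetric] by simp
    ultimately show ?thesis
      by (simp add: abs_mult mult_right_mono)
  qed simp
  have "((\<lambda>y. cdf m y - cdf m x) \<longlongrightarrow> 0) (at x)"
    using DERIV_isCont[OF cdf_m_has_real_derivative, of x] unfolding isCont_def by (rule LIM_zero)
  then have "((\<lambda>y. C * \<bar>cdf m y - cdf m x\<bar>) \<longlongrightarrow> 0) (at x)"
    by (intro tendsto_mult_right_zero tendsto_rabs_zero)
  then have "((\<lambda>y. cdf f y - cdf f x) \<longlongrightarrow> 0) (at x)"
    by (rule Lim_null_comparison[OF always_eventually[OF allI[OF bound]]])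
  then show ?thesis
    unfolding isCont_def by (rule LIM_zero_cancel)
qed

lemma cdf_f_surj:
  assumes "0 < u" "u < 1"
  obtains z where "cdf f z = u"
proof -
  have "\<forall>\<^sub>F y in at_bot. cdf f y < u"
    using cdf_tendsto_at_bot[OF f_int] assms(1) by (rule order_tendstoD)
  then obtain y1 where y1: "cdf f y1 < u"
    by (auto simp: eventually_at_bot_linorder)
  have "\<forall>\<^sub>F y in at_top. ccdf f y < 1 - u"
    using ccdf_tendsto_at_top[OF f_int] assms(2) by (intro order_tendstoD) auto
  then obtain y2 where "ccdf f y2 < 1 - u"
    by (auto simp: eventually_at_top_linorder)
  then have y2: "u < cdf f y2"
    using cdf_add_ccdf[OF f_int, of y2] f_prob by simp
  have "y1 \<le> y2"
  proof (rule ccontr)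
    assume "\<not> y1 \<le> y2"
    then have "cdf f y2 < cdf f y1"
      using strict_mono_cdf_f by (simp add: strict_mono_less)
    with y1 y2 show False
      by simp
  qed
  moreover have "continuous_on {y1..y2} (cdf f)"
    using isCont_cdf_f by (intro continuous_at_imp_continuous_on) auto
  ultimately show thesis
    using IVT'[of "cdf f" y1 u y2] less_imp_le[OF y1] less_imp_le[OF y2] that by blast
qed

lemma cdf_f_ot_map: "cdf f (ot_map m f x) = cdf m x"
proof -
  obtain z where z: "cdf f z = cdf m x"
    by (rule cdf_f_surj[of "cdf m x"]) (use cdf_m_bounds in auto)
  then have "ot_map m f x = z"
    using quantile_strict_mono[OF strict_mono_cdf_f, of z] by (simp add: ot_map_def)
  with z show ?thesis
    by simp
qed

lemma ccdf_f_ot_map: "ccdf f (ot_map m f x) = ccdf m x"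
  using cdf_add_ccdf[OF f_int, of "ot_map m f x"] cdf_add_ccdf[OF m_int, of x] f_prob m_prob cdf_f_ot_map
  by simp

lemma strict_mono_ot_map: "strict_mono (ot_map m f)"
  using strict_mono_cdf_m strict_mono_cdf_f
  by (simp add: strict_mono_def cdf_f_ot_map[symmetric] strict_mono_less)

lemma isCont_ot_map: "isCont (ot_map m f) x"
proof -
  have "isCont (quantile (cdf f)) (cdf f (ot_map m f x))"
    by (rule isCont_inverse_function[where d=1])
      (auto simp: quantile_strict_mono[OF strict_mono_cdf_f] isCont_cdf_f)
  then have "isCont (quantile (cdf f)) (cdf m x)"
    by (simp add: cdf_f_ot_map)
  with DERIV_isCont[OF cdf_m_has_real_derivative] have "isCont (\<lambda>y. quantile (cdf f) (cdf m y)) x"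
    by (rule isCont_o2)
  then show ?thesis
    by (simp add: ot_map_def[abs_def])
qed

lemma min_cdf_ccdf_ot_map_bounds:
  "c * min (cdf m (ot_map m f x)) (ccdf m (ot_map m f x)) \<le> min (cdf m x) (ccdf m x)
   \<and> min (cdf m x) (ccdf m x) \<le> C * min (cdf m (ot_map m f x)) (ccdf m (ot_map m f x))"
proof -
  let ?z = "ot_map m f x"
  have "c * cdf m ?z \<le> cdf m x" "cdf m x \<le> C * cdf m ?z"
    using set_integral_bounds[of "{..?z}"] by (simp_all add: cdf_def[symmetric] cdf_f_ot_map)
  moreover have "c * ccdf m ?z \<le> ccdf m x" "ccdf m x \<le> C * ccdf m ?z"
    using set_integral_bounds[of "{?z..}"] by (simp_all add: ccdf_def[symmetric] ccdf_f_ot_map)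
  moreover have "c * min (cdf m ?z) (ccdf m ?z) \<le> c * cdf m ?z" "c * min (cdf m ?z) (ccdf m ?z) \<le> c * ccdf m ?z"
    using c_pos by (simp_all add: mult_left_mono)
  moreover have "C * min (cdf m ?z) (ccdf m ?z) = min (C * cdf m ?z) (C * ccdf m ?z)"
    using c_pos c_le_C by (simp add: min_mult_distrib_left)
  ultimately show ?thesis
    by (auto simp: min_def)
qed

lemma cdf_m_ot_map_quotient_bounds:
  assumes "y \<noteq> x"
  shows "1 / C \<le> (cdf m (ot_map m f y) - cdf m (ot_map m f x)) / (cdf m y - cdf m x)
    \<and> (cdf m (ot_map m f y) - cdf m (ot_map m f x)) / (cdf m y - cdf m x) \<le> 1 / c"
proof -
  define q where "q = (cdf m y - cdf m x) / (cdf m (ot_map m f y) - cdf m (ot_map m f x))"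
  have "ot_map m f y \<noteq> ot_map m f x"
    using strict_mono_ot_map assms by (auto simp: strict_mono_eq)
  then have "c \<le> q" "q \<le> C"
    using cdf_quotient_bounds[of "ot_map m f x" "ot_map m f y"] by (simp_all add: cdf_f_ot_map q_def)
  then have "1 / C \<le> 1 / q" "1 / q \<le> 1 / c"
    using c_pos by (simp_all add: field_simps)
  then show ?thesis
    by (simp add: q_def)
qed

lemma AE_ot_map_has_real_derivative:
  "AE x in lborel. \<exists>D. (ot_map m f has_real_derivative D) (at x)
     \<and> m x / (C * m (ot_map m f x)) \<le> D \<and> D \<le> m x / (c * m (ot_map m f x))"
proof -
  have "AE x in lborel. \<forall>p q. 0 < p \<longrightarrow> p < q \<longrightarrow> \<not> Dini_gap (ot_map m f) p q x"
    using strict_mono_ot_map isCont_ot_map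
    by (intro AE_no_Dini_gap) (auto intro: strict_mono_mono continuous_at_imp_continuous_on)
  then show ?thesis
  proof eventually_elim
    case (elim x)
    have "0 < 1 / C"
      using c_pos c_le_C by simp
    from has_real_derivative_of_comparable_increments[OF strict_mono_cdf_m cdf_m_has_real_derivative
        cdf_m_has_real_derivative m_pos m_pos strict_mono_ot_map isCont_ot_map cdf_m_ot_map_quotient_bounds
        this elim[rule_format]]
    have "\<exists>D. (ot_map m f has_real_derivative D) (at x)
        \<and> 1 / C * m x / m (ot_map m f x) \<le> D \<and> D \<le> 1 / c * m x / m (ot_map m f x)"
      by blast
    then show ?case
      by (simp add: mult.commute)
  qed
qed

end

lemma bounds_from_comparable_scales:
  fixes K c C D a a' s s' :: real
  assumes pos: "0 < K" "0 < c" "0 < a'" "0 < s" "0 < s'"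
    and a: "1 / K \<le> a / s" "a / s \<le> K" and a': "1 / K \<le> a' / s'" "a' / s' \<le> K"
    and s: "c * s' \<le> s" "s \<le> C * s'"
    and D: "a / (C * a') \<le> D" "D \<le> a / (c * a')"
  shows "c / (C * K\<^sup>2) \<le> D \<and> D \<le> C * K\<^sup>2 / c"
proof -
  have "0 < C"
    using s pos by (smt (verit) mult_le_cancel_right)
  have "s \<le> K * a" "a \<le> K * s" "s' \<le> K * a'" "a' \<le> K * s'"
    using a a' pos by (simp_all add: field_simps)
  have "a \<le> K * (C * (K * a'))"
    using \<open>a \<le> K * s\<close> s(2) \<open>s' \<le> K * a'\<close> pos \<open>0 < C\<close>
    by (smt (verit) mult_left_mono)
  then have upper: "a / a' \<le> C * K\<^sup>2"
    using pos by (simp add: divide_le_eq power2_eq_square mult_ac)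
  have "c * a' \<le> K * (K * a)"
    using \<open>a' \<le> K * s'\<close> s(1) \<open>s \<le> K * a\<close> pos
    by (smt (verit) mult_left_mono mult.left_commute)
  then have lower: "c / K\<^sup>2 \<le> a / a'"
    using pos by (simp add: le_divide_eq divide_le_eq power2_eq_square mult_ac)
  have "c / (C * K\<^sup>2) = (c / K\<^sup>2) / C"
    by simp
  also have "\<dots> \<le> (a / a') / C"
    using divide_right_mono[OF lower, of C] \<open>0 < C\<close> by simp
  also have "\<dots> \<le> D"
    using D(1) by (simp add: mult.commute)
  finally have "c / (C * K\<^sup>2) \<le> D" .
  have "D \<le> (a / a') / c"
    using D(2) by (simp add: mult.commute)
  also have "\<dots> \<le> C * K\<^sup>2 / c"
    using divide_right_mono[OF upper, of c] pos by simp
  finally show ?thesis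
    using \<open>c / (C * K\<^sup>2) \<le> D\<close> by simp
qed

theorem lemma2p6:
  fixes V f :: "real \<Rightarrow> real" and L C\<^sub>V c C :: real
  assumes V_convex: "convex_on UNIV V"
    and V_lip: "L-lipschitz_on UNIV V"
    and m_int: "integrable lborel (\<lambda>x. exp (- V x))"
    and m_prob: "(LBINT x. exp (- V x)) = 1"
    and CV_pos: "C\<^sub>V > 0"
    and CV_bound: "\<And>x. 1 / C\<^sub>V \<le> exp (- V x) /
          min (LBINT t:{..x}. exp (- V t)) (LBINT t:{x..}. exp (- V t))
        \<and> exp (- V x) /
          min (LBINT t:{..x}. exp (- V t)) (LBINT t:{x..}. exp (- V t)) \<le> C\<^sub>V"
    and cC: "0 < c" "c < C"
    and f_meas: "f \<in> borel_measurable borel"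
    and f_int: "integrable lborel f"
    and f_prob: "(LBINT x. f x) = 1"
    and f_bounds: "AE x in lborel. c * exp (- V x) \<le> f x \<and> f x \<le> C * exp (- V x)"
  shows "AE x in lborel. \<exists>D.
           (ot_map (\<lambda>x. exp (- V x)) f has_real_derivative D) (at x)
         \<and> c / (C * C\<^sub>V\<^sup>2) \<le> D \<and> D \<le> C * C\<^sub>V\<^sup>2 / c"
proof -
  define m where "m = (\<lambda>x. exp (- V x))"
  interpret comparable_densities m f c C
  proof
    show "continuous_on UNIV m"
      unfolding m_def using lipschitz_on_continuous_on[OF V_lip] by (intro continuous_intros)
  qed (use m_int m_prob f_int f_prob cC f_bounds in \<open>simp_all add: m_def\<close>)
  have CV: "1 / C\<^sub>V \<le> m x / min (cdf m x) (ccdf m x) \<and> m x / min (cdf m x) (ccdf m x) \<le> C\<^sub>V" for x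
    using CV_bound[of x] by (simp add: m_def cdf_def ccdf_def)
  show ?thesis
    using AE_ot_map_has_real_derivative
  proof eventually_elim
    case (elim x)
    then obtain D where D: "(ot_map m f has_real_derivative D) (at x)"
      "m x / (C * m (ot_map m f x)) \<le> D" "D \<le> m x / (c * m (ot_map m f x))"
      by blast
    have "c / (C * C\<^sub>V\<^sup>2) \<le> D \<and> D \<le> C * C\<^sub>V\<^sup>2 / c"
      using CV[of x] CV[of "ot_map m f x"] min_cdf_ccdf_ot_map_bounds[of x] D(2,3)
      by (intro bounds_from_comparable_scales[OF CV_pos c_pos m_pos min_cdf_ccdf_m_pos min_cdf_ccdf_m_pos]) auto
    with D(1) show ?case
      unfolding m_def by blast
  qed
qed

end
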